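(* Let $b\in\mathbb{Z}\setminus\{1,-1\}$ be odd. Then the $D_2$-symmetric curves $g^\varepsilon$ representing the torus knot class $\mathcal{T}(2,b)$, defined in the context, converge strongly in $W^{2,2}(\mathbb{R}/\mathbb{Z},\mathbb{R}^3)$ to the curve $\mathrm{tpc}[\pi]$ as $\varepsilon\to0$.
   Context: $R_1=\mathrm{diag}(1,-1,-1)$, $R_2=\mathrm{diag}(-1,1,-1)$, $R_3=\mathrm{diag}(-1,-1,1)$. For an arc $\alpha:[0,1/4]\to\mathbb{R}^3$ let $G[\alpha]$ be the $1$-periodic curve with $G[\alpha](t)=\alpha(t)$ on $[0,1/4)$, $R_1\alpha(1/2-t)$ on $[1/4,1/2)$, $R_2\alpha(t-1/2)$ on $[1/2,3/4)$, $R_3\alpha(1-t)$ on $[3/4,1)$. Define $\mathrm{tpc}[\pi]=G[\alpha_2]$ with $\alpha_2(t)=\frac1{4\pi}(1-\cos4\pi t,\ \sin4\pi t,\ 0)$ (a planar figure-eight of two tangent circles of radius $1/(4\pi)$). Construction for odd $b\ge3$ and $0<\varepsilon<1/(4(b+1))$: set $\rho=\varepsilon^2$ and $r=(1/4-(b+1)\varepsilon)/\pi>0$. Let $\phi(t)=t$ for $t\in[0,\frac{b-1}2]$, $\phi(t)=\frac b2-\frac12(t-\frac{b+1}2)^2$ for $t\in[\frac{b-1}2,\frac{b+1}2]$, $\phi(t)=\frac b2$ for $t\ge\frac{b+1}2$, and $\phi_\varepsilon(t)=\pi\phi(t/\varepsilon)$. Helical part: $h^\varepsilon(t)=(\rho(-1)^{(b-1)/2}\sin\phi_\varepsilon(t),\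 t,\ \rho\cos\phi_\varepsilon(t))$. Stadium part: for $t\in[\frac{(b+1)\varepsilon}2,\frac14-\frac{(b+1)\varepsilon}2]$, $\sigma^\varepsilon(t)=(\rho+r-r\cos(\frac1r(t-\frac{(b+1)\varepsilon}2)),\ \frac{(b+1)\varepsilon}2+r\sin(\frac1r(t-\frac{(b+1)\varepsilon}2)),\ 0)$; for $t\in[\frac14-\frac{(b+1)\varepsilon}2,\frac14]$, $\sigma^\varepsilon(t)=(\rho+2r,\ \frac14-t,\ 0)$. Let $\alpha^\varepsilon=h^\varepsilon$ on $[0,\frac{(b+1)\varepsilon}2]$ and $\alpha^\varepsilon=\sigma^\varepsilon$ on $(\frac{(b+1)\varepsilon}2,\frac14]$, and $g^\varepsilon=G[\alpha^\varepsilon]$; this is a $C^{1,1}$ closed $D_2$-symmetric curve of knot type $\mathcal{T}(2,b)$. For odd $b\le-3$, let $g^\varepsilon$ be the image under the reflection $(x,y,z)\mapsto(x,y,-z)$ of the curve constructed for $|b|$; it is $D_2$-symmetric and of knot type $\mathcal{T}(2,b)$. *)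

theory Defs
  imports "HOL-Analysis.Analysis"
begin

type_synonym vec3 = "real ^ 3"

definition mk3 :: "real \<Rightarrow> real \<Rightarrow> real \<Rightarrow> vec3" where
  "mk3 x y z = vector [x, y, z]"

definition R1 :: "vec3 \<Rightarrow> vec3" where "R1 v = mk3 (v$1) (- v$2) (- v$3)"
definition R2 :: "vec3 \<Rightarrow> vec3" where "R2 v = mk3 (- v$1) (v$2) (- v$3)"
definition R3 :: "vec3 \<Rightarrow> vec3" where "R3 v = mk3 (- v$1) (- v$2) (v$3)"

definition Gsym :: "(real \<Rightarrow> vec3) \<Rightarrow> real \<Rightarrow> vec3" where
  "Gsym \<alpha> t = (let s = t - of_int \<lfloor>t\<rfloor> in
     if s < 1/4 then \<alpha> s
     else if s < 1/2 then R1 (\<alpha> (1/2 - s))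
     else if s < 3/4 then R2 (\<alpha> (s - 1/2))
     else R3 (\<alpha> (1 - s)))"

definition alpha2 :: "real \<Rightarrow> vec3" where
  "alpha2 t = (1 / (4*pi)) *\<^sub>R mk3 (1 - cos (4*pi*t)) (sin (4*pi*t)) 0"

definition tpc_pi :: "real \<Rightarrow> vec3" where "tpc_pi = Gsym alpha2"

definition phiT :: "int \<Rightarrow> real \<Rightarrow> real" where
  "phiT b t = (if t \<le> (real_of_int b - 1)/2 then t
     else if t \<le> (real_of_int b + 1)/2 then real_of_int b / 2 - (1/2) * (t - (real_of_int b + 1)/2)^2
     else real_of_int b / 2)"

definition phiE :: "int \<Rightarrow> real \<Rightarrow> real \<Rightarrow> real" where
  "phiE b \<epsilon> t = pi * phiT b (t / \<epsilon>)"

definition rhoE :: "real \<Rightarrow> real" where "rhoE \<epsilon> = \<epsilon>^2"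

definition rE :: "int \<Rightarrow> real \<Rightarrow> real" where
  "rE b \<epsilon> = (1/4 - (real_of_int b + 1) * \<epsilon>) / pi"

definition helE :: "int \<Rightarrow> real \<Rightarrow> real \<Rightarrow> vec3" where
  "helE b \<epsilon> t = mk3 (rhoE \<epsilon> * (-1) ^ nat ((b - 1) div 2) * sin (phiE b \<epsilon> t))
                     t (rhoE \<epsilon> * cos (phiE b \<epsilon> t))"

definition stadE :: "int \<Rightarrow> real \<Rightarrow> real \<Rightarrow> vec3" where
  "stadE b \<epsilon> t = (let r = rE b \<epsilon>; c = (real_of_int b + 1) * \<epsilon> / 2 in
     if t \<le> 1/4 - c then
       mk3 (rhoE \<epsilon> + r - r * cos ((t - c) / r)) (c + r * sin ((t - c) / r)) 0
     else mk3 (rhoE \<epsilon> + 2*r) (1/4 - t) 0)"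

definition alphaE :: "int \<Rightarrow> real \<Rightarrow> real \<Rightarrow> vec3" where
  "alphaE b \<epsilon> t = (if t \<le> (real_of_int b + 1) * \<epsilon> / 2 then helE b \<epsilon> t else stadE b \<epsilon> t)"

definition reflz :: "vec3 \<Rightarrow> vec3" where "reflz v = mk3 (v$1) (v$2) (- v$3)"

text \<open>g^epsilon for odd b with |b| \<ge> 3 (meaningful for 0 < epsilon < 1/(4(|b|+1))).\<close>
definition gE :: "int \<Rightarrow> real \<Rightarrow> real \<Rightarrow> vec3" where
  "gE b \<epsilon> = (if b \<ge> 0 then Gsym (alphaE b \<epsilon>)
              else (\<lambda>t. reflz (Gsym (alphaE (- b) \<epsilon>) t)))"

text \<open>Sobolev space W^{2,2}(R/Z,R^3) via weak derivatives of 1-periodic functions,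
  tested against smooth 1-periodic real test functions.\<close>
definition smooth_periodic_test :: "(real \<Rightarrow> real) \<Rightarrow> bool" where
  "smooth_periodic_test \<phi> \<longleftrightarrow> (\<forall>k x. (deriv ^^ k) \<phi> differentiable at x) \<and> (\<forall>t. \<phi> (t + 1) = \<phi> t)"

definition periodic1 :: "(real \<Rightarrow> vec3) \<Rightarrow> bool" where
  "periodic1 f \<longleftrightarrow> (\<forall>t. f (t + 1) = f t)"

definition weak_deriv :: "(real \<Rightarrow> vec3) \<Rightarrow> (real \<Rightarrow> vec3) \<Rightarrow> bool" where
  "weak_deriv f h \<longleftrightarrow> set_integrable lborel {0..1} f \<and> set_integrable lborel {0..1} h \<and>
     (\<forall>\<phi>. smooth_periodic_test \<phi> \<longrightarrow>
        (LINT t:{0..1}|lborel. deriv \<phi> t *\<^sub>R f t) = - (LINT t:{0..1}|lborel. \<phi> t *\<^sub>R h t))"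

definition L2_on01 :: "(real \<Rightarrow> vec3) \<Rightarrow> bool" where
  "L2_on01 f \<longleftrightarrow> f \<in> borel_measurable lborel \<and> set_integrable lborel {0..1} (\<lambda>t. (norm (f t))^2)"

definition sqnorm01 :: "(real \<Rightarrow> vec3) \<Rightarrow> real" where
  "sqnorm01 f = (LINT t:{0..1}|lborel. (norm (f t))^2)"

definition W22 :: "(real \<Rightarrow> vec3) \<Rightarrow> (real \<Rightarrow> vec3) \<Rightarrow> (real \<Rightarrow> vec3) \<Rightarrow> bool" where
  "W22 f f1 f2 \<longleftrightarrow> periodic1 f \<and> periodic1 f1 \<and> periodic1 f2 \<and>
     L2_on01 f \<and> L2_on01 f1 \<and> L2_on01 f2 \<and> weak_deriv f f1 \<and> weak_deriv f1 f2"

end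

theory Submission
  imports Defs
begin

(* For fixed t in (0, 1/4) the arc alphaE b eps is, once eps is small, on its half circle, whose
   centre and radius tend to those of the circle alpha2; so the arc and its first two derivatives
   converge pointwise to alpha2, alpha2', alpha2''. The helix has radius eps^2 while its phase has
   second derivative of order eps^-2, so all these derivatives stay bounded uniformly in eps, and
   dominated convergence gives L^2 convergence. The symmetric extension G[.] carries this over to
   the closed curves; the arcs start on the z-axis and end on the x-axis with the right tangents,
   so the extended curves are C^1 and their piecewise derivatives are weak derivatives. For
   negative b the curves are mirror images in the xy-plane, which fixes the planar limit. *)

lemma mk3_nth [simp]: "mk3 x y z $ 1 = x" "mk3 x y z $ 2 = y" "mk3 x y z $ 3 = z"
  by (simp_all add: mk3_def)

lemma vec3_eq_iff: "(u::vec3) = v \<longleftrightarrow> u$1 = v$1 \<and> u$2 = v$2 \<and> u$3 = v$3"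
  by (simp add: vec_eq_iff forall_3)

lemma mk3_as_sum: "mk3 x y z = x *\<^sub>R mk3 1 0 0 + y *\<^sub>R mk3 0 1 0 + z *\<^sub>R mk3 0 0 1"
  by (simp add: vec3_eq_iff)

lemma norm_mk3_le:
  assumes "\<bar>x\<bar> \<le> C" "\<bar>y\<bar> \<le> C" "\<bar>z\<bar> \<le> C"
  shows "norm (mk3 x y z) \<le> 3 * C"
  using norm_le_l1_cart[of "mk3 x y z"] assms by (simp add: sum_3)

lemma has_vector_derivative_mk3:
  assumes "(f has_real_derivative f') F" "(g has_real_derivative g') F" "(h has_real_derivative h') F"
  shows "((\<lambda>t. mk3 (f t) (g t) (h t)) has_vector_derivative mk3 f' g' h') F"
  using assms unfolding has_real_derivative_iff_has_vector_derivative
  by (subst (1 2) mk3_as_sum)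
     (intro derivative_intros bounded_linear.has_vector_derivative[OF bounded_linear_scaleR_left])

lemma continuous_on_mk3 [continuous_intros]:
  "continuous_on S f \<Longrightarrow> continuous_on S g \<Longrightarrow> continuous_on S h \<Longrightarrow>
   continuous_on S (\<lambda>t. mk3 (f t) (g t) (h t))"
  by (subst mk3_as_sum) (intro continuous_intros)

lemma tendsto_mk3 [tendsto_intros]:
  "(f \<longlongrightarrow> a) F \<Longrightarrow> (g \<longlongrightarrow> b) F \<Longrightarrow> (h \<longlongrightarrow> c) F \<Longrightarrow>
   ((\<lambda>t. mk3 (f t) (g t) (h t)) \<longlongrightarrow> mk3 a b c) F"
  by (subst (1 2) mk3_as_sum) (intro tendsto_intros)

lemma borel_measurable_mk3 [measurable]:
  "f \<in> borel_measurable M \<Longrightarrow> g \<in> borel_measurable M \<Longrightarrow> h \<in> borel_measurable M \<Longrightarrow>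
   (\<lambda>t. mk3 (f t) (g t) (h t)) \<in> borel_measurable M"
  by (subst mk3_as_sum) (intro borel_measurable_add borel_measurable_scaleR borel_measurable_const)

lemma reflections_nth [simp]:
  "R1 v $ 1 = v$1" "R1 v $ 2 = - v$2" "R1 v $ 3 = - v$3"
  "R2 v $ 1 = - v$1" "R2 v $ 2 = v$2" "R2 v $ 3 = - v$3"
  "R3 v $ 1 = - v$1" "R3 v $ 2 = - v$2" "R3 v $ 3 = v$3"
  "reflz v $ 1 = v$1" "reflz v $ 2 = v$2" "reflz v $ 3 = - v$3"
  by (simp_all add: R1_def R2_def R3_def reflz_def)

lemma bounded_linear_reflections: "bounded_linear R1" "bounded_linear R2" "bounded_linear R3" "bounded_linear reflz"
  by (auto simp: linear_conv_bounded_linear[symmetric] vec3_eq_iff intro!: linearI)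

lemma norm_reflections [simp]:
  "norm (R1 v) = norm v" "norm (R2 v) = norm v" "norm (R3 v) = norm v" "norm (reflz v) = norm v"
  by (simp_all add: norm_eq_sqrt_inner inner_vec_def sum_3)

lemma reflections_scaleR [simp]:
  "R1 (c *\<^sub>R v) = c *\<^sub>R R1 v" "R2 (c *\<^sub>R v) = c *\<^sub>R R2 v" "R3 (c *\<^sub>R v) = c *\<^sub>R R3 v"
  by (simp_all add: vec3_eq_iff)

lemma reflections_uminus [simp]: "R1 (- v) = - R1 v" "R2 (- v) = - R2 v" "R3 (- v) = - R3 v"
  by (simp_all add: vec3_eq_iff)

lemma reflz_reflz [simp]: "reflz (reflz v) = v"
  by (simp add: vec3_eq_iff)

lemma reflz_scaleR: "reflz (c *\<^sub>R v) = c *\<^sub>R reflz v"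
  by (simp add: vec3_eq_iff)

lemma borel_measurable_reflections [measurable]:
  "R1 \<in> borel_measurable borel" "R2 \<in> borel_measurable borel"
  "R3 \<in> borel_measurable borel" "reflz \<in> borel_measurable borel"
  using bounded_linear_reflections by (auto intro!: borel_measurable_continuous_onI linear_continuous_on)

section \<open>Weak derivatives and dominated convergence on the unit interval\<close>

lemma set_integrable_01_bounded:
  fixes f :: "real \<Rightarrow> 'b::{banach,second_countable_topology}"
  assumes "f \<in> borel_measurable borel" "\<And>t. t \<in> {0..1} \<Longrightarrow> norm (f t) \<le> K"
  shows "set_integrable lborel {0..1} f"
  unfolding set_integrable_def
  by (rule integrableI_bounded_set_indicator[where B=K]) (use assms in \<open>auto intro!: AE_I2\<close>)

lemma L2_on01_bounded:
  assumes "f \<in> borel_measurable borel" "\<And>t. t \<in> {0..1} \<Longrightarrow> norm (f t) \<le> K"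
  shows "L2_on01 f"
  unfolding L2_on01_def
  using assms by (auto intro!: set_integrable_01_bounded[where K="K^2"] power_mono)

lemma smooth_periodic_test_C1:
  assumes "smooth_periodic_test \<phi>"
  shows "\<And>x. (\<phi> has_real_derivative deriv \<phi> x) (at x)"
    and "continuous_on UNIV \<phi>" "continuous_on UNIV (deriv \<phi>)" "\<phi> 1 = \<phi> 0"
proof -
  have "(deriv ^^ 0) \<phi> differentiable at x" "(deriv ^^ Suc 0) \<phi> differentiable at x" for x
    using assms unfolding smooth_periodic_test_def by blast+
  then have d0: "\<phi> differentiable at x" and d1: "deriv \<phi> differentiable at x" for x
    by simp_all
  show "(\<phi> has_real_derivative deriv \<phi> x) (at x)" for x
    using d0 DERIV_deriv_iff_real_differentiable by blast
  show "continuous_on UNIV \<phi>" "continuous_on UNIV (deriv \<phi>)"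
    using d0 d1 by (meson continuous_at_imp_continuous_on differentiable_imp_continuous_within)+
  show "\<phi> 1 = \<phi> 0"
    using assms unfolding smooth_periodic_test_def by (metis add_0)
qed

lemma weak_deriv_piecewise_C1:
  assumes per: "periodic1 f" and cont: "continuous_on {0..1} f"
    and meas [measurable]: "f \<in> borel_measurable borel" "g \<in> borel_measurable borel"
    and bnd: "\<And>t. t \<in> {0..1} \<Longrightarrow> norm (f t) \<le> K" "\<And>t. t \<in> {0..1} \<Longrightarrow> norm (g t) \<le> K"
    and E: "finite E" and deriv: "\<And>t. t \<in> {0<..<1} - E \<Longrightarrow> (f has_vector_derivative g t) (at t)"
  shows "weak_deriv f g"
  unfolding weak_deriv_def
proof (intro conjI allI impI)
  show "set_integrable lborel {0..1} f" "set_integrable lborel {0..1} g"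
    using meas bnd by (blast intro: set_integrable_01_bounded)+
  fix \<phi> assume test: "smooth_periodic_test \<phi>"
  note \<phi> = smooth_periodic_test_C1[OF test]
  obtain B0 where B0: "\<And>t. t \<in> {0..1} \<Longrightarrow> norm (\<phi> t) \<le> B0"
    using continuous_on_compact_bound[OF compact_Icc continuous_on_subset[OF \<phi>(2)]] by blast
  obtain B1 where B1: "\<And>t. t \<in> {0..1} \<Longrightarrow> norm (deriv \<phi> t) \<le> B1"
    using continuous_on_compact_bound[OF compact_Icc continuous_on_subset[OF \<phi>(3)]] by blast
  have [measurable]: "\<phi> \<in> borel_measurable borel" "deriv \<phi> \<in> borel_measurable borel"
    using \<phi>(2,3) by (auto intro: borel_measurable_continuous_onI)
  have int_f: "set_integrable lborel {0..1} (\<lambda>t. deriv \<phi> t *\<^sub>R f t)"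
    using B1 bnd(1) by (intro set_integrable_01_bounded[where K="B1*K"])
      (auto simp: norm_scaleR intro!: mult_mono intro: order_trans[OF abs_ge_zero] order_trans[OF norm_ge_zero])
  have int_g: "set_integrable lborel {0..1} (\<lambda>t. \<phi> t *\<^sub>R g t)"
    using B0 bnd(2) by (intro set_integrable_01_bounded[where K="B0*K"])
      (auto simp: norm_scaleR intro!: mult_mono intro: order_trans[OF abs_ge_zero] order_trans[OF norm_ge_zero])
  have boundary: "\<phi> 1 *\<^sub>R f 1 = \<phi> 0 *\<^sub>R f 0"
    using \<phi>(4) per unfolding periodic1_def by (metis add_0)
  have "((\<lambda>t. deriv \<phi> t *\<^sub>R f t) has_integral (- integral {0..1} (\<lambda>t. \<phi> t *\<^sub>R g t))) {0..1}"
  proof (rule integration_by_parts_interior_strong[OF bounded_bilinear_scaleR E])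
    show "((\<lambda>t. \<phi> t *\<^sub>R g t) has_integral
        \<phi> 1 *\<^sub>R f 1 - \<phi> 0 *\<^sub>R f 0 - - integral {0..1} (\<lambda>t. \<phi> t *\<^sub>R g t)) {0..1}"
      using boundary set_borel_integral_eq_integral(1)[OF int_g] by (simp add: integrable_integral)
  qed (use \<phi> cont deriv in \<open>auto simp: has_real_derivative_iff_has_vector_derivative intro: continuous_on_subset\<close>)
  then show "(LINT t:{0..1}|lborel. deriv \<phi> t *\<^sub>R f t) = - (LINT t:{0..1}|lborel. \<phi> t *\<^sub>R g t)"
    using set_borel_integral_eq_integral(2)[OF int_f] set_borel_integral_eq_integral(2)[OF int_g]
    by (simp add: integral_unique)
qed

lemma integral_dominated_convergence_at_right:
  fixes s :: "real \<Rightarrow> 'a \<Rightarrow> real"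
  assumes meas: "\<forall>\<^sub>F e in at_right 0. s e \<in> borel_measurable M" and w: "integrable M w"
    and lim: "AE x in M. ((\<lambda>e. s e x) \<longlongrightarrow> f x) (at_right 0)"
    and bnd: "\<forall>\<^sub>F e in at_right 0. AE x in M. norm (s e x) \<le> w x"
    and [measurable]: "f \<in> borel_measurable M"
  shows "((\<lambda>e. integral\<^sup>L M (s e)) \<longlongrightarrow> integral\<^sup>L M f) (at_right 0)"
proof -
  from eventually_conj[OF meas bnd] obtain d where d: "d > 0"
    and hd: "\<And>e. 0 < e \<Longrightarrow> e < d \<Longrightarrow> s e \<in> borel_measurable M \<and> (AE x in M. norm (s e x) \<le> w x)"
    unfolding eventually_at_right_field by auto
  show ?thesis
  proof (rule tendsto_at_right_sequentially[OF d])
    fix S :: "nat \<Rightarrow> real"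
    assume S: "\<And>n. 0 < S n" "\<And>n. S n < d" "decseq S" "S \<longlonglongrightarrow> 0"
    have S_lim: "filterlim S (at_right 0) sequentially"
      using S(1) by (intro tendsto_imp_filterlim_at_right[OF S(4)]) auto
    have "AE x in M. (\<lambda>n. s (S n) x) \<longlonglongrightarrow> f x"
      using lim by eventually_elim (rule filterlim_compose[OF _ S_lim])
    then show "(\<lambda>n. integral\<^sup>L M (s (S n))) \<longlonglongrightarrow> integral\<^sup>L M f"
      using hd S w by (intro integral_dominated_convergence[where w=w]) auto
  qed
qed

section \<open>The symmetric extension\<close>

text \<open>The derivative of \<open>G[\<alpha>]\<close> is again built from \<open>\<alpha>'\<close> by the same rule, except that the two
  time-reversed pieces change sign; \<open>Gsym_sgn sg \<alpha>\<close> covers both cases.\<close>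

definition Gsym_sgn :: "real \<Rightarrow> (real \<Rightarrow> vec3) \<Rightarrow> real \<Rightarrow> vec3" where
  "Gsym_sgn sg \<alpha> t = (let s = t - of_int \<lfloor>t\<rfloor> in
     if s < 1/4 then \<alpha> s
     else if s < 1/2 then sg *\<^sub>R R1 (\<alpha> (1/2 - s))
     else if s < 3/4 then R2 (\<alpha> (s - 1/2))
     else sg *\<^sub>R R3 (\<alpha> (1 - s)))"

lemma Gsym_eq_Gsym_sgn: "Gsym = Gsym_sgn 1"
  by (auto simp: Gsym_def Gsym_sgn_def fun_eq_iff Let_def)

lemma periodic1_Gsym_sgn: "periodic1 (Gsym_sgn sg \<alpha>)"
  unfolding periodic1_def Gsym_sgn_def by simp

lemma Gsym_sgn_unit_interval:
  assumes "t \<in> {0..<1}"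
  shows "Gsym_sgn sg \<alpha> t = (if t < 1/4 then \<alpha> t
     else if t < 1/2 then sg *\<^sub>R R1 (\<alpha> (1/2 - t))
     else if t < 3/4 then R2 (\<alpha> (t - 1/2))
     else sg *\<^sub>R R3 (\<alpha> (1 - t)))"
proof -
  have "\<lfloor>t\<rfloor> = 0" using assms by (simp add: floor_eq_iff)
  then show ?thesis by (simp add: Gsym_sgn_def)
qed

lemma Gsym_sgn_1: "Gsym_sgn sg \<alpha> 1 = \<alpha> 0"
  by (simp add: Gsym_sgn_def)

lemma borel_measurable_Gsym_sgn [measurable]:
  assumes [measurable]: "\<alpha> \<in> borel_measurable borel"
  shows "Gsym_sgn sg \<alpha> \<in> borel_measurable borel"
proof -
  have [measurable]: "(\<lambda>t::real. t - real_of_int \<lfloor>t\<rfloor>) \<in> borel_measurable borel"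
    by measurable
  show ?thesis
    unfolding Gsym_sgn_def[abs_def] Let_def by measurable
qed

lemma norm_Gsym_sgn_le:
  assumes "\<And>u. u \<in> {0..1/4} \<Longrightarrow> norm (\<alpha> u) \<le> K" "\<bar>sg\<bar> = 1"
  shows "norm (Gsym_sgn sg \<alpha> t) \<le> K"
proof -
  define s where "s = t - of_int \<lfloor>t\<rfloor>"
  have s: "s \<in> {0..<1}" unfolding s_def by (simp add: floor_le_iff) linarith
  have "Gsym_sgn sg \<alpha> t = Gsym_sgn sg \<alpha> s" unfolding s_def Gsym_sgn_def by simp
  then show ?thesis using s assms by (auto simp: Gsym_sgn_unit_interval)
qed

lemma continuous_on_Gsym_sgn:
  assumes cont: "continuous_on UNIV \<alpha>"
    and "sg *\<^sub>R R1 (\<alpha> (1/4)) = \<alpha> (1/4)" "R2 (\<alpha> 0) = sg *\<^sub>R R1 (\<alpha> 0)"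
    and "sg *\<^sub>R R3 (\<alpha> (1/4)) = R2 (\<alpha> (1/4))" "sg *\<^sub>R R3 (\<alpha> 0) = \<alpha> 0"
  shows "continuous_on {0..1} (Gsym_sgn sg \<alpha>)"
proof -
  have cR: "continuous_on UNIV R1" "continuous_on UNIV R2" "continuous_on UNIV R3"
    using bounded_linear_reflections by (auto intro: linear_continuous_on)
  have piece: "continuous_on {a..b} (Gsym_sgn sg \<alpha>)"
    if "a < b" "continuous_on {a..b} p" "\<And>t. t \<in> {a..<b} \<Longrightarrow> Gsym_sgn sg \<alpha> t = p t"
      "p b = Gsym_sgn sg \<alpha> b" for a b p
    using that(2) by (rule continuous_on_eq) (use that in \<open>fastforce simp: order.order_iff_strict\<close>)
  have "continuous_on {0..1/4} (Gsym_sgn sg \<alpha>)"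
    by (rule piece[where p=\<alpha>]) (use assms in \<open>auto simp: Gsym_sgn_unit_interval intro: continuous_on_subset\<close>)
  moreover have "continuous_on {1/4..1/2} (Gsym_sgn sg \<alpha>)"
    by (rule piece[where p="\<lambda>t. sg *\<^sub>R R1 (\<alpha> (1/2 - t))"])
      (use assms in \<open>auto simp: Gsym_sgn_unit_interval
        intro!: continuous_intros continuous_on_compose2[OF cR(1)] continuous_on_compose2[OF cont]\<close>)
  moreover have "continuous_on {1/2..3/4} (Gsym_sgn sg \<alpha>)"
    by (rule piece[where p="\<lambda>t. R2 (\<alpha> (t - 1/2))"])
      (use assms in \<open>auto simp: Gsym_sgn_unit_interval
        intro!: continuous_intros continuous_on_compose2[OF cR(2)] continuous_on_compose2[OF cont]\<close>)
  moreover have "continuous_on {3/4..1} (Gsym_sgn sg \<alpha>)"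
    by (rule piece[where p="\<lambda>t. sg *\<^sub>R R3 (\<alpha> (1 - t))"])
      (use assms in \<open>auto simp: Gsym_sgn_unit_interval Gsym_sgn_1
        intro!: continuous_intros continuous_on_compose2[OF cR(3)] continuous_on_compose2[OF cont]\<close>)
  moreover have "{0..1::real} = ({0..1/4} \<union> {1/4..1/2}) \<union> ({1/2..3/4} \<union> {3/4..1})" by auto
  ultimately show ?thesis
    by (metis closed_atLeastAtMost closed_Un continuous_on_closed_Un)
qed

lemma has_vector_derivative_reflect:
  assumes "(\<alpha> has_vector_derivative a) (at (c - t))"
  shows "((\<lambda>y. \<alpha> (c - y)) has_vector_derivative - a) (at t)"
proof -
  have "((\<lambda>y. c - y) has_vector_derivative -1) (at t)"
    by (auto intro!: derivative_eq_intros simp flip: has_real_derivative_iff_has_vector_derivative)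
  from vector_diff_chain_at[OF this] assms show ?thesis by (simp add: o_def)
qed

lemma has_vector_derivative_shift:
  assumes "(\<alpha> has_vector_derivative a) (at (t - c))"
  shows "((\<lambda>y. \<alpha> (y - c)) has_vector_derivative a) (at t)"
proof -
  have "((\<lambda>y. y - c) has_vector_derivative 1) (at t)"
    by (auto intro!: derivative_eq_intros simp flip: has_real_derivative_iff_has_vector_derivative)
  from vector_diff_chain_at[OF this] assms show ?thesis by (simp add: o_def)
qed

lemma has_vector_derivative_Gsym_sgn:
  assumes t: "t \<in> {0<..<1} - {1/4, 1/2, 3/4}"
    and deriv: "\<And>u. u \<in> {t, 1/2 - t, t - 1/2, 1 - t} \<inter> {0<..<1/4} \<Longrightarrow>
      (\<alpha> has_vector_derivative \<alpha>' u) (at u)"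
  shows "(Gsym_sgn sg \<alpha> has_vector_derivative Gsym_sgn (-sg) \<alpha>' t) (at t)"
proof -
  have lin: "bounded_linear (\<lambda>v. sg *\<^sub>R R1 v)" "bounded_linear (\<lambda>v. sg *\<^sub>R R3 v)"
    using bounded_linear_reflections
    by (auto intro: bounded_linear_compose[OF bounded_linear_scaleR_right])
  note local_eq = has_vector_derivative_transform_within_open
  consider "t < 1/4" | "1/4 < t" "t < 1/2" | "1/2 < t" "t < 3/4" | "3/4 < t"
    using t by force
  then show ?thesis
  proof cases
    case 1
    have "(\<alpha> has_vector_derivative \<alpha>' t) (at t)" using t 1 by (intro deriv) auto
    then have "(Gsym_sgn sg \<alpha> has_vector_derivative \<alpha>' t) (at t)"
      by (rule local_eq[where S="{0<..<1/4}"]) (use t 1 in \<open>auto simp: Gsym_sgn_unit_interval\<close>)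
    then show ?thesis using t 1 by (simp add: Gsym_sgn_unit_interval)
  next
    case 2
    have "(\<alpha> has_vector_derivative \<alpha>' (1/2 - t)) (at (1/2 - t))" using 2 by (intro deriv) auto
    from bounded_linear.has_vector_derivative[OF lin(1) has_vector_derivative_reflect[OF this]]
    have "(Gsym_sgn sg \<alpha> has_vector_derivative sg *\<^sub>R R1 (- \<alpha>' (1/2 - t))) (at t)"
      by (rule local_eq[where S="{1/4<..<1/2}"]) (use t 2 in \<open>auto simp: Gsym_sgn_unit_interval\<close>)
    then show ?thesis using t 2 by (simp add: Gsym_sgn_unit_interval)
  next
    case 3
    have "(\<alpha> has_vector_derivative \<alpha>' (t - 1/2)) (at (t - 1/2))" using 3 by (intro deriv) auto
    from bounded_linear.has_vector_derivative[OF bounded_linear_reflections(2) has_vector_derivative_shift[OF this]]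
    have "(Gsym_sgn sg \<alpha> has_vector_derivative R2 (\<alpha>' (t - 1/2))) (at t)"
      by (rule local_eq[where S="{1/2<..<3/4}"]) (use t 3 in \<open>auto simp: Gsym_sgn_unit_interval\<close>)
    then show ?thesis using t 3 by (simp add: Gsym_sgn_unit_interval)
  next
    case 4
    have "(\<alpha> has_vector_derivative \<alpha>' (1 - t)) (at (1 - t))" using t 4 by (intro deriv) auto
    from bounded_linear.has_vector_derivative[OF lin(2) has_vector_derivative_reflect[OF this]]
    have "(Gsym_sgn sg \<alpha> has_vector_derivative sg *\<^sub>R R3 (- \<alpha>' (1 - t))) (at t)"
      by (rule local_eq[where S="{3/4<..<1}"]) (use t 4 in \<open>auto simp: Gsym_sgn_unit_interval\<close>)
    then show ?thesis using t 4 by (simp add: Gsym_sgn_unit_interval)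
  qed
qed

lemma W22_Gsym_sgn:
  assumes cont: "continuous_on UNIV \<alpha>" "continuous_on UNIV \<alpha>'"
    and meas: "\<alpha>'' \<in> borel_measurable borel"
    and bnd: "\<And>u. u \<in> {0..1/4} \<Longrightarrow> norm (\<alpha> u) \<le> K \<and> norm (\<alpha>' u) \<le> K \<and> norm (\<alpha>'' u) \<le> K"
    and S: "finite S"
    and deriv: "\<And>u. u \<in> {0<..<1/4} - S \<Longrightarrow>
        (\<alpha> has_vector_derivative \<alpha>' u) (at u) \<and> (\<alpha>' has_vector_derivative \<alpha>'' u) (at u)"
    and start: "\<alpha> 0 $ 1 = 0" "\<alpha> 0 $ 2 = 0" "\<alpha>' 0 $ 3 = 0"
    and "end": "\<alpha> (1/4) $ 2 = 0" "\<alpha> (1/4) $ 3 = 0" "\<alpha>' (1/4) $ 1 = 0"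
  shows "W22 (Gsym_sgn 1 \<alpha>) (Gsym_sgn (-1) \<alpha>') (Gsym_sgn 1 \<alpha>'')"
proof -
  have [measurable]: "\<alpha> \<in> borel_measurable borel" "\<alpha>' \<in> borel_measurable borel"
    using cont by (auto intro: borel_measurable_continuous_onI)
  have b: "norm (Gsym_sgn 1 \<alpha> t) \<le> K" "norm (Gsym_sgn (-1) \<alpha>' t) \<le> K"
    "norm (Gsym_sgn 1 \<alpha>'' t) \<le> K" for t
    using bnd by (auto intro!: norm_Gsym_sgn_le)
  have c: "continuous_on {0..1} (Gsym_sgn 1 \<alpha>)" "continuous_on {0..1} (Gsym_sgn (-1) \<alpha>')"
    using cont start "end" by (auto intro!: continuous_on_Gsym_sgn simp: vec3_eq_iff)
  define E where "E = {1/4, 1/2, 3/4} \<union> S \<union> (\<lambda>u. 1/2 - u) ` S \<union> (\<lambda>u. u + 1/2) ` S \<union> (\<lambda>u. 1 - u) ` S"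
  have E: "finite E" using S by (simp add: E_def)
  have off_S: "u \<in> {0<..<1/4} - S"
    if "t \<notin> E" "u \<in> {t, 1/2 - t, t - 1/2, 1 - t} \<inter> {0<..<1/4}" for t u
    using that unfolding E_def by (auto intro: rev_image_eqI)
  have d: "(Gsym_sgn 1 \<alpha> has_vector_derivative Gsym_sgn (-1) \<alpha>' t) (at t) \<and>
      (Gsym_sgn (-1) \<alpha>' has_vector_derivative Gsym_sgn 1 \<alpha>'' t) (at t)"
    if t: "t \<in> {0<..<1} - E" for t
  proof -
    have "t \<in> {0<..<1} - {1/4, 1/2, 3/4}" using t by (simp add: E_def)
    then show ?thesis
      using has_vector_derivative_Gsym_sgn[of t \<alpha> \<alpha>' 1] has_vector_derivative_Gsym_sgn[of t \<alpha>' \<alpha>'' "-1"]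
        deriv off_S t by auto
  qed
  show ?thesis unfolding W22_def
    using meas b c E d
    by (auto intro!: periodic1_Gsym_sgn L2_on01_bounded weak_deriv_piecewise_C1)
qed

lemma tendsto_Gsym_sgn:
  assumes t: "t \<in> {0<..<1} - {1/4, 1/2, 3/4}"
    and lim: "\<And>u. u \<in> {0<..<1/4} \<Longrightarrow> ((\<lambda>e. A e u) \<longlongrightarrow> A0 u) F"
  shows "((\<lambda>e. Gsym_sgn sg (A e) t) \<longlongrightarrow> Gsym_sgn sg A0 t) F"
proof -
  have cR: "isCont R1 x" "isCont R2 x" "isCont R3 x" for x
    using bounded_linear_reflections by (auto intro: linear_continuous_at)
  consider "t < 1/4" | "1/4 < t" "t < 1/2" | "1/2 < t" "t < 3/4" | "3/4 < t"
    using t by force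
  then show ?thesis
  proof cases
    case 1 then show ?thesis using t lim[of t] by (simp add: Gsym_sgn_unit_interval)
  next
    case 2 then show ?thesis using t lim[of "1/2 - t"]
      by (simp add: Gsym_sgn_unit_interval) (intro tendsto_intros isCont_tendsto_compose[OF cR(1)])
  next
    case 3 then show ?thesis using t lim[of "t - 1/2"]
      by (simp add: Gsym_sgn_unit_interval) (intro tendsto_intros isCont_tendsto_compose[OF cR(2)])
  next
    case 4 then show ?thesis using t lim[of "1 - t"]
      by (simp add: Gsym_sgn_unit_interval) (intro tendsto_intros isCont_tendsto_compose[OF cR(3)])
  qed
qed

lemma sqnorm01_tendsto_0_bounded:
  fixes F :: "real \<Rightarrow> real \<Rightarrow> vec3"
  assumes ev: "\<forall>\<^sub>F e in at_right 0. F e \<in> borel_measurable borel \<and> (\<forall>t\<in>{0..1}. norm (F e t) \<le> K)"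
    and [measurable]: "F0 \<in> borel_measurable borel" and F0: "\<And>t. t \<in> {0..1} \<Longrightarrow> norm (F0 t) \<le> K"
    and N: "finite N" and lim: "\<And>t. t \<in> {0..1} - N \<Longrightarrow> ((\<lambda>e. F e t) \<longlongrightarrow> F0 t) (at_right 0)"
  shows "((\<lambda>e. sqnorm01 (\<lambda>t. F e t - F0 t)) \<longlongrightarrow> 0) (at_right 0)"
proof -
  define s where "s e t = indicator {0..1} t * (norm (F e t - F0 t))\<^sup>2" for e t
  have "sqnorm01 (\<lambda>t. F e t - F0 t) = integral\<^sup>L lborel (s e)" for e
    unfolding sqnorm01_def set_lebesgue_integral_def s_def by simp
  moreover have "((\<lambda>e. integral\<^sup>L lborel (s e)) \<longlongrightarrow> integral\<^sup>L lborel (\<lambda>t::real. 0)) (at_right 0)"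
  proof (rule integral_dominated_convergence_at_right[where w="\<lambda>t. indicator {0..1} t * (2*K)^2"])
    show "\<forall>\<^sub>F e in at_right 0. s e \<in> borel_measurable lborel"
      using ev
    proof eventually_elim
      case (elim e)
      then have [measurable]: "F e \<in> borel_measurable borel" by simp
      show ?case unfolding s_def by measurable
    qed
    show "integrable lborel (\<lambda>t::real. indicator {0..1} t * (2 * K)\<^sup>2)"
      by (simp add: integrable_real_mult_indicator)
    show "\<forall>\<^sub>F e in at_right 0. AE t in lborel. norm (s e t) \<le> indicator {0..1} t * (2 * K)\<^sup>2"
      using ev
    proof eventually_elim
      case (elim e)
      have "norm (F e t - F0 t) \<le> 2 * K" if "t \<in> {0..1}" for t
        using norm_triangle_ineq4[of "F e t" "F0 t"] bspec[OF elim[THEN conjunct2] that] F0[OF that]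
        by linarith
      then have "(norm (F e t - F0 t))\<^sup>2 \<le> (2 * K)\<^sup>2" if "t \<in> {0..1}" for t
        using that by (intro power_mono) auto
      then show ?case
        by (intro AE_I2) (auto simp: s_def indicator_def simp del: power_mult_distrib)
    qed
    have "((\<lambda>e. s e t) \<longlongrightarrow> 0) (at_right 0)" if "t \<notin> N" for t
      using that lim[of t] by (cases "t \<in> {0..1}") (auto simp: s_def intro!: tendsto_eq_intros)
    then show "AE t in lborel. ((\<lambda>e. s e t) \<longlongrightarrow> 0) (at_right 0)"
      using N by (intro AE_I'[where N=N] countable_imp_null_set_lborel) (auto intro: countable_finite)
  qed simp
  ultimately show ?thesis by simp
qed

lemma sqnorm01_Gsym_sgn_tendsto_0:
  fixes A :: "real \<Rightarrow> real \<Rightarrow> vec3"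
  assumes lim: "\<And>u. u \<in> {0<..<1/4} \<Longrightarrow> ((\<lambda>e. A e u) \<longlongrightarrow> A0 u) (at_right 0)"
    and ev: "\<forall>\<^sub>F e in at_right 0. A e \<in> borel_measurable borel \<and> (\<forall>u\<in>{0..1/4}. norm (A e u) \<le> K)"
    and "A0 \<in> borel_measurable borel" "\<And>u. u \<in> {0..1/4} \<Longrightarrow> norm (A0 u) \<le> K"
    and sg: "\<bar>sg\<bar> = 1"
  shows "((\<lambda>e. sqnorm01 (\<lambda>t. Gsym_sgn sg (A e) t - Gsym_sgn sg A0 t)) \<longlongrightarrow> 0) (at_right 0)"
proof (rule sqnorm01_tendsto_0_bounded[where N="{0, 1/4, 1/2, 3/4, 1}"])
  show "\<forall>\<^sub>F e in at_right 0. Gsym_sgn sg (A e) \<in> borel_measurable borel \<and>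
      (\<forall>t\<in>{0..1}. norm (Gsym_sgn sg (A e) t) \<le> K)"
    using ev by eventually_elim (use sg in \<open>auto intro: norm_Gsym_sgn_le\<close>)
  show "((\<lambda>e. Gsym_sgn sg (A e) t) \<longlongrightarrow> Gsym_sgn sg A0 t) (at_right 0)"
    if "t \<in> {0..1} - {0, 1/4, 1/2, 3/4, 1}" for t
    using that by (intro tendsto_Gsym_sgn lim) auto
qed (use assms in \<open>auto intro: norm_Gsym_sgn_le\<close>)

section \<open>The limit curve\<close>

definition alpha2' :: "real \<Rightarrow> vec3" where
  "alpha2' t = mk3 (sin (4*pi*t)) (cos (4*pi*t)) 0"

definition alpha2'' :: "real \<Rightarrow> vec3" where
  "alpha2'' t = mk3 (4*pi * cos (4*pi*t)) (- (4*pi * sin (4*pi*t))) 0"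

lemma alpha2_mk3: "alpha2 t = mk3 ((1 - cos (4*pi*t)) / (4*pi)) (sin (4*pi*t) / (4*pi)) 0"
  by (simp add: alpha2_def mk3_def vector_def vec_eq_iff forall_3)

lemma alpha2_has_vector_derivative:
  "(alpha2 has_vector_derivative alpha2' t) (at t)"
  "(alpha2' has_vector_derivative alpha2'' t) (at t)"
  unfolding alpha2_mk3[abs_def] alpha2'_def[abs_def] alpha2''_def
  by (rule has_vector_derivative_mk3; auto intro!: derivative_eq_intros)+

lemma continuous_on_alpha2:
  "continuous_on UNIV alpha2" "continuous_on UNIV alpha2'" "continuous_on UNIV alpha2''"
  unfolding alpha2_mk3[abs_def] alpha2'_def[abs_def] alpha2''_def[abs_def]
  by (intro continuous_intros; simp)+

lemma norm_alpha2_le: "norm (alpha2 t) \<le> 96" "norm (alpha2' t) \<le> 96" "norm (alpha2'' t) \<le> 96"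
proof -
  have scaled: "\<bar>4*pi*x\<bar> \<le> 32" "\<bar>x / (4*pi)\<bar> \<le> 32" if "\<bar>x\<bar> \<le> 2" for x
  proof -
    have "pi * \<bar>x\<bar> \<le> 4 * 2"
      using that pi_less_4 by (intro mult_mono) auto
    then show "\<bar>4*pi*x\<bar> \<le> 32" "\<bar>x / (4*pi)\<bar> \<le> 32"
      using that pi_gt3 by (simp_all add: abs_mult abs_divide field_simps)
  qed
  have trig: "\<bar>1 - cos y\<bar> \<le> 2" "\<bar>sin y\<bar> \<le> 2" "\<bar>cos y\<bar> \<le> 2" for y :: real
    using abs_sin_le_one[of y] abs_cos_le_one[of y] by linarith+
  show "norm (alpha2 t) \<le> 96" "norm (alpha2'' t) \<le> 96"
    unfolding alpha2_mk3 alpha2''_def by (intro norm_mk3_le[where C=32, simplified] scaled trig; simp)+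
  show "norm (alpha2' t) \<le> 96"
    unfolding alpha2'_def
    by (intro norm_mk3_le[where C=32, simplified]) (auto intro: order_trans[OF trig(2)] order_trans[OF trig(3)])
qed

lemma W22_tpc_pi: "W22 tpc_pi (Gsym_sgn (-1) alpha2') (Gsym_sgn 1 alpha2'')"
  unfolding tpc_pi_def Gsym_eq_Gsym_sgn
  using continuous_on_alpha2 alpha2_has_vector_derivative norm_alpha2_le
  by (intro W22_Gsym_sgn[where K=96 and S="{}"] borel_measurable_continuous_onI)
     (auto simp: alpha2_mk3 alpha2'_def)

section \<open>The approximating arcs\<close>

lemma continuous_on_if_le:
  fixes f g :: "real \<Rightarrow> 'b::topological_space"
  assumes "continuous_on UNIV f" "continuous_on UNIV g" "f a = g a"
  shows "continuous_on UNIV (\<lambda>x. if x \<le> a then f x else g x)"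
proof -
  have "continuous_on {..a} (\<lambda>x. if x \<le> a then f x else g x)"
    by (rule continuous_on_eq[OF continuous_on_subset[OF assms(1)]]) auto
  moreover have "continuous_on {a..} (\<lambda>x. if x \<le> a then f x else g x)"
    by (rule continuous_on_eq[OF continuous_on_subset[OF assms(2)]]) (use assms(3) in auto)
  ultimately have "continuous_on ({..a} \<union> {a..}) (\<lambda>x. if x \<le> a then f x else g x)"
    by (intro continuous_on_closed_Un) auto
  moreover have "{..a} \<union> {a..} = (UNIV :: real set)" by auto
  ultimately show ?thesis by simp
qed

definition phiT' :: "int \<Rightarrow> real \<Rightarrow> real" where
  "phiT' b x = (if x \<le> (real_of_int b - 1)/2 then 1
     else if x \<le> (real_of_int b + 1)/2 then (real_of_int b + 1)/2 - x else 0)"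

definition phiT'' :: "int \<Rightarrow> real \<Rightarrow> real" where
  "phiT'' b x = (if x \<le> (real_of_int b - 1)/2 then 0
     else if x \<le> (real_of_int b + 1)/2 then -1 else 0)"

lemma phiT_has_derivative:
  assumes "x \<noteq> (real_of_int b - 1)/2" "x \<noteq> (real_of_int b + 1)/2"
  shows "(phiT b has_real_derivative phiT' b x) (at x)"
    and "(phiT' b has_real_derivative phiT'' b x) (at x)"
proof -
  define p q where "p = (real_of_int b - 1)/2" and "q = (real_of_int b + 1)/2"
  have pq: "p < q" unfolding p_def q_def by simp
  note local_eq = has_field_derivative_transform_within_open
  consider "x < p" | "p < x" "x < q" | "q < x" using assms unfolding p_def q_def by fastforce
  then have "(phiT b has_real_derivative phiT' b x) (at x) \<and> (phiT' b has_real_derivative phiT'' b x) (at x)"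
  proof cases
    case 1
    have "((\<lambda>x. x) has_real_derivative 1) (at x)" "((\<lambda>x. 1) has_real_derivative 0) (at x)"
      by (auto intro!: derivative_eq_intros)
    from this[THEN local_eq[where S="{..<p}"]] show ?thesis
      using 1 by (simp add: phiT_def phiT'_def phiT''_def p_def)
  next
    case 2
    have "((\<lambda>x. real_of_int b / 2 - (1/2) * (x - q)^2) has_real_derivative q - x) (at x)"
      "((\<lambda>x. q - x) has_real_derivative -1) (at x)"
      by (auto intro!: derivative_eq_intros simp: field_simps)
    from this[THEN local_eq[where S="{p<..<q}"]] show ?thesis
      using 2 by (simp add: phiT_def phiT'_def phiT''_def p_def q_def)
  next
    case 3
    have "((\<lambda>x. real_of_int b / 2) has_real_derivative 0) (at x)" "((\<lambda>x. 0) has_real_derivative 0) (at x)"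
      by (auto intro!: derivative_eq_intros)
    from this[THEN local_eq[where S="{q<..}"]] show ?thesis
      using 3 pq by (simp add: phiT_def phiT'_def phiT''_def p_def q_def)
  qed
  then show "(phiT b has_real_derivative phiT' b x) (at x)" "(phiT' b has_real_derivative phiT'' b x) (at x)"
    by blast+
qed

lemma continuous_on_phiT: "continuous_on UNIV (phiT b)" "continuous_on UNIV (phiT' b)"
  unfolding phiT_def[abs_def] phiT'_def[abs_def]
  by (intro continuous_on_if_le continuous_intros; simp add: power2_eq_square field_simps)+

lemma abs_phiT'_le: "\<bar>phiT' b x\<bar> \<le> 1" and abs_phiT''_le: "\<bar>phiT'' b x\<bar> \<le> 1"
  by (auto simp: phiT'_def phiT''_def field_simps)

text \<open>In \<open>helE'\<close> and \<open>helE''\<close> the factor \<open>rhoE \<epsilon> = \<epsilon>\<^sup>2\<close> has been cancelled against the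
  powers of \<open>1/\<epsilon>\<close> coming from \<open>phiE\<close>, which makes them visibly bounded uniformly in \<open>\<epsilon>\<close>.\<close>

definition hlen :: "int \<Rightarrow> real \<Rightarrow> real" where
  "hlen b \<epsilon> = (real_of_int b + 1) * \<epsilon> / 2"

definition hsign :: "int \<Rightarrow> real" where
  "hsign b = (-1) ^ nat ((b - 1) div 2)"

definition helE' :: "int \<Rightarrow> real \<Rightarrow> real \<Rightarrow> vec3" where
  "helE' b \<epsilon> t = mk3 (hsign b * (pi * \<epsilon> * phiT' b (t/\<epsilon>)) * cos (phiE b \<epsilon> t)) 1
     (- (pi * \<epsilon> * phiT' b (t/\<epsilon>)) * sin (phiE b \<epsilon> t))"

definition helE'' :: "int \<Rightarrow> real \<Rightarrow> real \<Rightarrow> vec3" where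
  "helE'' b \<epsilon> t = mk3
     (hsign b * pi * (phiT'' b (t/\<epsilon>) * cos (phiE b \<epsilon> t) - pi * (phiT' b (t/\<epsilon>))\<^sup>2 * sin (phiE b \<epsilon> t))) 0
     (- pi * (phiT'' b (t/\<epsilon>) * sin (phiE b \<epsilon> t) + pi * (phiT' b (t/\<epsilon>))\<^sup>2 * cos (phiE b \<epsilon> t)))"

definition arc_angle :: "int \<Rightarrow> real \<Rightarrow> real \<Rightarrow> real" where
  "arc_angle b \<epsilon> t = (t - hlen b \<epsilon>) / rE b \<epsilon>"

definition arcE :: "int \<Rightarrow> real \<Rightarrow> real \<Rightarrow> vec3" where
  "arcE b \<epsilon> t = mk3 (rhoE \<epsilon> + rE b \<epsilon> - rE b \<epsilon> * cos (arc_angle b \<epsilon> t))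
     (hlen b \<epsilon> + rE b \<epsilon> * sin (arc_angle b \<epsilon> t)) 0"

definition arcE' :: "int \<Rightarrow> real \<Rightarrow> real \<Rightarrow> vec3" where
  "arcE' b \<epsilon> t = mk3 (sin (arc_angle b \<epsilon> t)) (cos (arc_angle b \<epsilon> t)) 0"

definition arcE'' :: "int \<Rightarrow> real \<Rightarrow> real \<Rightarrow> vec3" where
  "arcE'' b \<epsilon> t = mk3 (cos (arc_angle b \<epsilon> t) / rE b \<epsilon>) (- sin (arc_angle b \<epsilon> t) / rE b \<epsilon>) 0"

definition segE :: "int \<Rightarrow> real \<Rightarrow> real \<Rightarrow> vec3" where
  "segE b \<epsilon> t = mk3 (rhoE \<epsilon> + 2 * rE b \<epsilon>) (1/4 - t) 0"

definition alphaE' :: "int \<Rightarrow> real \<Rightarrow> real \<Rightarrow> vec3" where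
  "alphaE' b \<epsilon> t = (if t \<le> hlen b \<epsilon> then helE' b \<epsilon> t
     else if t \<le> 1/4 - hlen b \<epsilon> then arcE' b \<epsilon> t else mk3 0 (-1) 0)"

definition alphaE'' :: "int \<Rightarrow> real \<Rightarrow> real \<Rightarrow> vec3" where
  "alphaE'' b \<epsilon> t = (if t \<le> hlen b \<epsilon> then helE'' b \<epsilon> t
     else if t \<le> 1/4 - hlen b \<epsilon> then arcE'' b \<epsilon> t else 0)"

lemma alphaE_pieces: "alphaE b \<epsilon> t = (if t \<le> hlen b \<epsilon> then helE b \<epsilon> t
     else if t \<le> 1/4 - hlen b \<epsilon> then arcE b \<epsilon> t else segE b \<epsilon> t)"
  by (simp add: alphaE_def stadE_def Let_def hlen_def arcE_def arc_angle_def segE_def)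

lemma helE_mk3: "helE b \<epsilon> t = mk3 (rhoE \<epsilon> * hsign b * sin (phiE b \<epsilon> t)) t (rhoE \<epsilon> * cos (phiE b \<epsilon> t))"
  by (simp add: helE_def hsign_def)

lemma phiE_has_derivative:
  assumes "\<epsilon> > 0" "t \<noteq> \<epsilon> * (real_of_int b - 1)/2" "t \<noteq> \<epsilon> * (real_of_int b + 1)/2"
  shows "(phiE b \<epsilon> has_real_derivative pi / \<epsilon> * phiT' b (t/\<epsilon>)) (at t)"
    and "((\<lambda>t. phiT' b (t/\<epsilon>)) has_real_derivative phiT'' b (t/\<epsilon>) / \<epsilon>) (at t)"
proof -
  have "t/\<epsilon> \<noteq> (real_of_int b - 1)/2" "t/\<epsilon> \<noteq> (real_of_int b + 1)/2"
    using assms by (auto simp: field_simps)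
  note D = phiT_has_derivative[OF this]
  have scale: "((\<lambda>t. t / \<epsilon>) has_real_derivative 1/\<epsilon>) (at t)"
    using assms(1) by (auto intro!: derivative_eq_intros)
  show "(phiE b \<epsilon> has_real_derivative pi / \<epsilon> * phiT' b (t/\<epsilon>)) (at t)"
    using DERIV_cmult[OF DERIV_chain2[OF D(1) scale], of pi] unfolding phiE_def[abs_def] by simp
  show "((\<lambda>t. phiT' b (t/\<epsilon>)) has_real_derivative phiT'' b (t/\<epsilon>) / \<epsilon>) (at t)"
    using DERIV_chain2[OF D(2) scale] by simp
qed

lemma abs_mult_trig_le:
  fixes x :: real shows "\<bar>x * sin \<phi>\<bar> \<le> \<bar>x\<bar>" "\<bar>x * cos \<phi>\<bar> \<le> \<bar>x\<bar>"
  by (simp_all add: abs_mult mult_left_le)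

lemma abs_trig_comb_le:
  fixes a c :: real
  shows "\<bar>a * cos \<phi> - c * sin \<phi>\<bar> \<le> \<bar>a\<bar> + \<bar>c\<bar>" "\<bar>a * sin \<phi> + c * cos \<phi>\<bar> \<le> \<bar>a\<bar> + \<bar>c\<bar>"
  using abs_triangle_ineq4[of "a * cos \<phi>" "c * sin \<phi>"] abs_triangle_ineq[of "a * sin \<phi>" "c * cos \<phi>"]
    abs_mult_trig_le[of a \<phi>] abs_mult_trig_le[of c \<phi>]
  by linarith+

lemma abs_mult_le_mult: "\<bar>x\<bar> \<le> a \<Longrightarrow> \<bar>y\<bar> \<le> c \<Longrightarrow> \<bar>x * y\<bar> \<le> a * (c::real)"
  unfolding abs_mult by (intro mult_mono) auto

lemma hsign_half_turn:
  assumes "odd b" "1 \<le> b"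
  shows "sin (pi * real_of_int b / 2) = hsign b" "cos (pi * real_of_int b / 2) = 0"
proof -
  obtain k where k: "b = 2*k + 1" using assms(1) by (metis oddE)
  have half_turn: "pi * real_of_int b / 2 = real (nat k) * pi + pi/2"
    using k assms(2) by (simp add: field_simps)
  have "(b - 1) div 2 = k" using k by simp
  then show "sin (pi * real_of_int b / 2) = hsign b" "cos (pi * real_of_int b / 2) = 0"
    unfolding half_turn hsign_def by (simp_all add: sin_add cos_add cos_npi)
qed

lemma abs_hsign [simp]: "\<bar>hsign b\<bar> = 1"
  by (simp add: hsign_def)

lemma hsign_squared [simp]: "hsign b * hsign b = 1"
  by (simp add: hsign_def flip: power_add)

text \<open>The bound on \<open>\<epsilon>\<close> is half of the one in the construction, so that \<open>rE b \<epsilon> \<ge> 1/32\<close>.\<close>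

locale small_eps =
  fixes b :: int and \<epsilon> :: real
  assumes odd_b: "odd b" and b_ge3: "3 \<le> b"
    and eps_pos: "0 < \<epsilon>" and eps_small: "\<epsilon> < 1/(8*(real_of_int b + 1))"
begin

lemma helix_short: "(real_of_int b + 1) * \<epsilon> < 1/8"
proof -
  have "(real_of_int b + 1) * \<epsilon> < (real_of_int b + 1) * (1/(8*(real_of_int b + 1)))"
    using eps_small b_ge3 by (intro mult_strict_left_mono) auto
  also have "\<dots> = 1/8" using b_ge3 by simp
  finally show ?thesis .
qed

lemma helix_nonneg: "0 \<le> (real_of_int b + 1) * \<epsilon>"
  using eps_pos b_ge3 by simp

lemma eps_lt: "\<epsilon> < 1/32"
  using helix_short mult_right_mono[of 4 "real_of_int b + 1" \<epsilon>] b_ge3 eps_pos by linarith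

lemma hlen_bounds: "0 < hlen b \<epsilon>" "hlen b \<epsilon> < 1/16"
  using eps_pos b_ge3 helix_short unfolding hlen_def by (simp, linarith)

lemma rhoE_bounds: "0 \<le> rhoE \<epsilon>" "rhoE \<epsilon> \<le> 1"
  using eps_pos eps_lt by (simp_all add: rhoE_def power_le_one)

lemma rE_bounds: "1/32 \<le> rE b \<epsilon>" "rE b \<epsilon> \<le> 1/4"
  using helix_short helix_nonneg pi_gt3 pi_less_4 by (simp_all add: rE_def field_simps)

lemma arc_angle_ends: "arc_angle b \<epsilon> (hlen b \<epsilon>) = 0" "arc_angle b \<epsilon> (1/4 - hlen b \<epsilon>) = pi"
proof -
  have "1/4 - (real_of_int b + 1) * \<epsilon> \<noteq> 0" using helix_short by simp
  moreover have "1/4 - hlen b \<epsilon> - hlen b \<epsilon> = 1/4 - (real_of_int b + 1) * \<epsilon>"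
    by (simp add: hlen_def)
  ultimately show "arc_angle b \<epsilon> (hlen b \<epsilon>) = 0" "arc_angle b \<epsilon> (1/4 - hlen b \<epsilon>) = pi"
    by (simp_all add: arc_angle_def rE_def)
qed

lemma phiE_hlen: "phiE b \<epsilon> (hlen b \<epsilon>) = pi * real_of_int b / 2" "phiT' b (hlen b \<epsilon> / \<epsilon>) = 0"
  using eps_pos by (simp_all add: phiE_def phiT_def phiT'_def hlen_def)

lemma alphaE_endpoints:
  "alphaE b \<epsilon> 0 = mk3 0 0 (rhoE \<epsilon>)" "alphaE' b \<epsilon> 0 $ 3 = 0"
  "alphaE b \<epsilon> (1/4) = mk3 (rhoE \<epsilon> + 2 * rE b \<epsilon>) 0 0" "alphaE' b \<epsilon> (1/4) = mk3 0 (-1) 0"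
  using hlen_bounds b_ge3
  by (simp_all add: alphaE_pieces helE_mk3 alphaE'_def helE'_def segE_def phiE_def phiT_def)

lemma continuous_on_alphaE: "continuous_on UNIV (alphaE b \<epsilon>)" "continuous_on UNIV (alphaE' b \<epsilon>)"
proof -
  have "helE b \<epsilon> (hlen b \<epsilon>) = arcE b \<epsilon> (hlen b \<epsilon>)" "helE' b \<epsilon> (hlen b \<epsilon>) = arcE' b \<epsilon> (hlen b \<epsilon>)"
    using hsign_half_turn[OF odd_b] b_ge3
    by (simp_all add: helE_mk3 helE'_def arcE_def arcE'_def arc_angle_ends phiE_hlen mult.assoc)
  moreover have "arcE b \<epsilon> (1/4 - hlen b \<epsilon>) = segE b \<epsilon> (1/4 - hlen b \<epsilon>)"
    "arcE' b \<epsilon> (1/4 - hlen b \<epsilon>) = mk3 0 (-1) 0"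
    by (simp_all add: arcE_def arcE'_def segE_def arc_angle_ends add.commute)
  moreover have "continuous_on UNIV (phiE b \<epsilon>)"
    unfolding phiE_def[abs_def] using eps_pos
    by (intro continuous_intros continuous_on_compose2[OF continuous_on_phiT(1)]) auto
  moreover have "continuous_on UNIV (\<lambda>t. phiT' b (t / \<epsilon>))"
    using eps_pos by (intro continuous_on_compose2[OF continuous_on_phiT(2)] continuous_intros) auto
  ultimately show "continuous_on UNIV (alphaE b \<epsilon>)" "continuous_on UNIV (alphaE' b \<epsilon>)"
    unfolding alphaE_pieces[abs_def] alphaE'_def[abs_def] helE_mk3[abs_def] helE'_def[abs_def]
      arcE_def[abs_def] arcE'_def[abs_def] segE_def[abs_def] arc_angle_def
    using hlen_bounds rE_bounds by (intro continuous_on_if_le continuous_intros; simp)+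
qed

lemma helE_has_derivative:
  assumes "u \<noteq> \<epsilon> * (real_of_int b - 1)/2" "u \<noteq> \<epsilon> * (real_of_int b + 1)/2"
  shows "(helE b \<epsilon> has_vector_derivative helE' b \<epsilon> u) (at u)"
    and "(helE' b \<epsilon> has_vector_derivative helE'' b \<epsilon> u) (at u)"
proof -
  note D = phiE_has_derivative[OF eps_pos assms]
  show "(helE b \<epsilon> has_vector_derivative helE' b \<epsilon> u) (at u)"
    unfolding helE_mk3[abs_def] helE'_def using eps_pos
    by (intro has_vector_derivative_mk3) (auto intro!: derivative_eq_intros D simp: rhoE_def power2_eq_square)
  show "(helE' b \<epsilon> has_vector_derivative helE'' b \<epsilon> u) (at u)"
    unfolding helE'_def[abs_def] helE''_def using eps_pos
    by (intro has_vector_derivative_mk3) (auto intro!: derivative_eq_intros D simp: power2_eq_square algebra_simps)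
qed

lemma arcE_has_derivative:
  "(arcE b \<epsilon> has_vector_derivative arcE' b \<epsilon> u) (at u)"
  "(arcE' b \<epsilon> has_vector_derivative arcE'' b \<epsilon> u) (at u)"
  using rE_bounds unfolding arcE_def[abs_def] arcE'_def[abs_def] arcE''_def arc_angle_def
  by (intro has_vector_derivative_mk3; auto intro!: derivative_eq_intros)+

lemma alphaE_has_derivative:
  assumes u: "u \<in> {0<..<1/4} - {\<epsilon> * (real_of_int b - 1)/2, hlen b \<epsilon>, 1/4 - hlen b \<epsilon>}"
  shows "(alphaE b \<epsilon> has_vector_derivative alphaE' b \<epsilon> u) (at u) \<and>
         (alphaE' b \<epsilon> has_vector_derivative alphaE'' b \<epsilon> u) (at u)"
proof -
  note local_eq = has_vector_derivative_transform_within_open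
  consider "u < hlen b \<epsilon>" | "hlen b \<epsilon> < u" "u < 1/4 - hlen b \<epsilon>" | "1/4 - hlen b \<epsilon> < u"
    using u by force
  then show ?thesis
  proof cases
    case 1
    then have "u \<noteq> \<epsilon> * (real_of_int b - 1)/2" "u \<noteq> \<epsilon> * (real_of_int b + 1)/2"
      using u by (auto simp: hlen_def mult.commute)
    from helE_has_derivative[OF this]
    have "(alphaE b \<epsilon> has_vector_derivative helE' b \<epsilon> u) (at u)"
      "(alphaE' b \<epsilon> has_vector_derivative helE'' b \<epsilon> u) (at u)"
      using 1 by (auto elim!: local_eq[where S="{..<hlen b \<epsilon>}"] simp: alphaE_pieces alphaE'_def)
    then show ?thesis using 1 by (simp add: alphaE'_def alphaE''_def)
  next
    case 2
    from arcE_has_derivative[of u]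
    have "(alphaE b \<epsilon> has_vector_derivative arcE' b \<epsilon> u) (at u)"
      "(alphaE' b \<epsilon> has_vector_derivative arcE'' b \<epsilon> u) (at u)"
      using 2 by (auto elim!: local_eq[where S="{hlen b \<epsilon><..<1/4 - hlen b \<epsilon>}"]
          simp: alphaE_pieces alphaE'_def)
    then show ?thesis using 2 by (simp add: alphaE'_def alphaE''_def)
  next
    case 3
    have "(segE b \<epsilon> has_vector_derivative mk3 0 (-1) 0) (at u)"
      unfolding segE_def[abs_def] by (intro has_vector_derivative_mk3) (auto intro!: derivative_eq_intros)
    then have "(alphaE b \<epsilon> has_vector_derivative mk3 0 (-1) 0) (at u)"
      by (rule local_eq[where S="{1/4 - hlen b \<epsilon><..}"]) (use 3 hlen_bounds in \<open>auto simp: alphaE_pieces\<close>)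
    moreover have "(alphaE' b \<epsilon> has_vector_derivative 0) (at u)"
      by (rule local_eq[OF has_vector_derivative_const, where S="{1/4 - hlen b \<epsilon><..}"])
        (use 3 hlen_bounds in \<open>auto simp: alphaE'_def\<close>)
    ultimately show ?thesis using 3 hlen_bounds by (simp add: alphaE'_def alphaE''_def)
  qed
qed

lemma helE_bounded:
  assumes "\<bar>u\<bar> \<le> 32"
  shows "norm (helE b \<epsilon> u) \<le> 96" "norm (helE' b \<epsilon> u) \<le> 96" "norm (helE'' b \<epsilon> u) \<le> 96"
proof -
  note bound = norm_mk3_le[where C=32, simplified]
  note trig_le = order_trans[OF abs_mult_trig_le(1)] order_trans[OF abs_mult_trig_le(2)]
  have p: "\<bar>phiT' b (u/\<epsilon>)\<bar> \<le> 1" "(phiT' b (u/\<epsilon>))\<^sup>2 \<le> 1" "\<bar>phiT'' b (u/\<epsilon>)\<bar> \<le> 1"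
    using abs_phiT'_le abs_phiT''_le by (simp_all add: abs_square_le_1)
  have slope: "\<bar>pi * \<epsilon> * phiT' b (u/\<epsilon>)\<bar> \<le> 32"
    using abs_mult_le_mult[OF abs_mult_le_mult p(1), of pi 4 \<epsilon> 8] eps_pos eps_lt pi_gt3 pi_less_4
    by simp
  have p2: "\<bar>pi * (phiT' b (u/\<epsilon>))\<^sup>2\<bar> \<le> 4"
    using mult_mono[OF _ p(2), of pi 4] pi_gt3 pi_less_4 by (simp add: abs_mult)
  have "\<bar>phiT'' b (u/\<epsilon>) * cos \<phi> - pi * (phiT' b (u/\<epsilon>))\<^sup>2 * sin \<phi>\<bar> \<le> 5"
    "\<bar>phiT'' b (u/\<epsilon>) * sin \<phi> + pi * (phiT' b (u/\<epsilon>))\<^sup>2 * cos \<phi>\<bar> \<le> 5" for \<phi>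
    using abs_trig_comb_le[of "phiT'' b (u/\<epsilon>)" \<phi> "pi * (phiT' b (u/\<epsilon>))\<^sup>2"] p(3) p2 by linarith+
  moreover have "pi * \<bar>x\<bar> \<le> 32" if "\<bar>x\<bar> \<le> 5" for x
    using mult_mono[OF _ that, of pi 4] pi_gt3 pi_less_4 by simp
  ultimately have curvature:
    "pi * \<bar>phiT'' b (u/\<epsilon>) * cos \<phi> - pi * (phiT' b (u/\<epsilon>))\<^sup>2 * sin \<phi>\<bar> \<le> 32"
    "pi * \<bar>phiT'' b (u/\<epsilon>) * sin \<phi> + pi * (phiT' b (u/\<epsilon>))\<^sup>2 * cos \<phi>\<bar> \<le> 32" for \<phi>
    by blast+
  show "norm (helE b \<epsilon> u) \<le> 96"
    unfolding helE_mk3 using rhoE_bounds assms by (intro bound trig_le) (auto simp: abs_mult)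
  show "norm (helE' b \<epsilon> u) \<le> 96"
    unfolding helE'_def using slope by (intro bound trig_le) (auto simp: abs_mult)
  show "norm (helE'' b \<epsilon> u) \<le> 96"
    unfolding helE''_def using curvature pi_gt_zero by (intro bound) (simp_all add: abs_mult)
qed

lemma arcE_bounded: "norm (arcE b \<epsilon> u) \<le> 96" "norm (arcE' b \<epsilon> u) \<le> 96" "norm (arcE'' b \<epsilon> u) \<le> 96"
proof -
  note bound = norm_mk3_le[where C=32, simplified]
  have r: "0 < rE b \<epsilon>" "rE b \<epsilon> \<le> 1/4" "1 / rE b \<epsilon> \<le> 32"
    using rE_bounds by (simp_all add: field_simps)
  have "\<bar>rE b \<epsilon> * cos (arc_angle b \<epsilon> u)\<bar> \<le> 1/4" "\<bar>rE b \<epsilon> * sin (arc_angle b \<epsilon> u)\<bar> \<le> 1/4"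
    using abs_mult_trig_le[of "rE b \<epsilon>" "arc_angle b \<epsilon> u"] r by simp_all
  then show "norm (arcE b \<epsilon> u) \<le> 96"
    unfolding arcE_def using rhoE_bounds r hlen_bounds
    by (intro bound; unfold abs_le_iff; intro conjI; linarith)
  show "norm (arcE' b \<epsilon> u) \<le> 96"
    unfolding arcE'_def by (intro bound) (auto intro: order_trans[OF abs_sin_le_one] order_trans[OF abs_cos_le_one])
  have "\<bar>x / rE b \<epsilon>\<bar> \<le> 32" if "\<bar>x\<bar> \<le> 1" for x
    using divide_right_mono[OF that, of "rE b \<epsilon>"] r by (simp add: abs_divide)
  then show "norm (arcE'' b \<epsilon> u) \<le> 96"
    unfolding arcE''_def by (intro bound) auto
qed

lemma alphaE_bounded:
  assumes u: "u \<in> {0..1/4}"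
  shows "norm (alphaE b \<epsilon> u) \<le> 96 \<and> norm (alphaE' b \<epsilon> u) \<le> 96 \<and> norm (alphaE'' b \<epsilon> u) \<le> 96"
proof -
  have "norm (segE b \<epsilon> u) \<le> 96" "norm (mk3 0 (-1) (0::real)) \<le> 96"
    unfolding segE_def using rhoE_bounds rE_bounds u by (intro norm_mk3_le[where C=32, simplified]; simp)+
  then show ?thesis
    using helE_bounded[of u] arcE_bounded[of u] u hlen_bounds
    by (simp add: alphaE_pieces alphaE'_def alphaE''_def)
qed

lemma borel_measurable_alphaE'': "alphaE'' b \<epsilon> \<in> borel_measurable borel"
proof -
  have [measurable]: "phiT' b \<in> borel_measurable borel" "phiT'' b \<in> borel_measurable borel"
    unfolding phiT'_def[abs_def] phiT''_def[abs_def] by measurable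
  have [measurable]: "phiE b \<epsilon> \<in> borel_measurable borel"
    unfolding phiE_def[abs_def] using eps_pos
    by (intro borel_measurable_continuous_onI continuous_intros continuous_on_compose2[OF continuous_on_phiT(1)]) auto
  show ?thesis
    unfolding alphaE''_def[abs_def] helE''_def[abs_def] arcE''_def[abs_def] arc_angle_def by measurable
qed

lemma gE_eq_Gsym_sgn: "gE b \<epsilon> = Gsym_sgn 1 (alphaE b \<epsilon>)"
  using b_ge3 by (simp add: gE_def Gsym_eq_Gsym_sgn)

lemma W22_gE:
  "W22 (gE b \<epsilon>) (Gsym_sgn (-1) (alphaE' b \<epsilon>)) (Gsym_sgn 1 (alphaE'' b \<epsilon>))"
  unfolding gE_eq_Gsym_sgn
  using continuous_on_alphaE borel_measurable_alphaE'' alphaE_bounded alphaE_has_derivative alphaE_endpoints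
  by (intro W22_Gsym_sgn[where K=96 and S="{\<epsilon> * (real_of_int b - 1)/2, hlen b \<epsilon>, 1/4 - hlen b \<epsilon>}"]) simp_all

end

lemma tendsto_arc_parameters:
  "((\<lambda>\<epsilon>. hlen b \<epsilon>) \<longlongrightarrow> 0) (at_right 0)" "((\<lambda>\<epsilon>. rhoE \<epsilon>) \<longlongrightarrow> 0) (at_right 0)"
  "((\<lambda>\<epsilon>. rE b \<epsilon>) \<longlongrightarrow> 1/(4*pi)) (at_right 0)"
  "((\<lambda>\<epsilon>. arc_angle b \<epsilon> u) \<longlongrightarrow> 4*pi*u) (at_right 0)"
proof -
  show h: "((\<lambda>\<epsilon>. hlen b \<epsilon>) \<longlongrightarrow> 0) (at_right 0)"
    unfolding hlen_def by (auto intro!: tendsto_eq_intros)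
  show "((\<lambda>\<epsilon>. rhoE \<epsilon>) \<longlongrightarrow> 0) (at_right 0)"
    unfolding rhoE_def by (auto intro!: tendsto_eq_intros)
  show r: "((\<lambda>\<epsilon>. rE b \<epsilon>) \<longlongrightarrow> 1/(4*pi)) (at_right 0)"
    unfolding rE_def by (auto intro!: tendsto_eq_intros)
  show "((\<lambda>\<epsilon>. arc_angle b \<epsilon> u) \<longlongrightarrow> 4*pi*u) (at_right 0)"
    unfolding arc_angle_def by (auto intro!: tendsto_eq_intros h r)
qed

lemma eventually_in_arc:
  assumes "u \<in> {0<..<1/4}"
  shows "\<forall>\<^sub>F \<epsilon> in at_right 0. hlen b \<epsilon> < u \<and> u \<le> 1/4 - hlen b \<epsilon>"
  using order_tendstoD(2)[OF tendsto_arc_parameters(1), of "min u (1/4 - u)" b] assms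
  by (auto elim!: eventually_mono)

lemma tendsto_alphaE:
  assumes u: "u \<in> {0<..<1/4}"
  shows "((\<lambda>\<epsilon>. alphaE b \<epsilon> u) \<longlongrightarrow> alpha2 u) (at_right 0)"
    and "((\<lambda>\<epsilon>. alphaE' b \<epsilon> u) \<longlongrightarrow> alpha2' u) (at_right 0)"
    and "((\<lambda>\<epsilon>. alphaE'' b \<epsilon> u) \<longlongrightarrow> alpha2'' u) (at_right 0)"
proof -
  note lim = tendsto_arc_parameters(1,3)[of b] tendsto_arc_parameters(2) tendsto_arc_parameters(4)[of b u]
  have "((\<lambda>\<epsilon>. arcE b \<epsilon> u) \<longlongrightarrow> alpha2 u) (at_right 0)"
    "((\<lambda>\<epsilon>. arcE' b \<epsilon> u) \<longlongrightarrow> alpha2' u) (at_right 0)"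
    "((\<lambda>\<epsilon>. arcE'' b \<epsilon> u) \<longlongrightarrow> alpha2'' u) (at_right 0)"
    unfolding arcE_def arcE'_def arcE''_def alpha2_mk3 alpha2'_def alpha2''_def
    by (auto intro!: tendsto_eq_intros lim simp: field_simps)
  moreover have "\<forall>\<^sub>F \<epsilon> in at_right 0. alphaE b \<epsilon> u = arcE b \<epsilon> u \<and> alphaE' b \<epsilon> u = arcE' b \<epsilon> u \<and>
      alphaE'' b \<epsilon> u = arcE'' b \<epsilon> u"
    using eventually_in_arc[OF u, of b] by eventually_elim (simp add: alphaE_pieces alphaE'_def alphaE''_def)
  ultimately show "((\<lambda>\<epsilon>. alphaE b \<epsilon> u) \<longlongrightarrow> alpha2 u) (at_right 0)"
    "((\<lambda>\<epsilon>. alphaE' b \<epsilon> u) \<longlongrightarrow> alpha2' u) (at_right 0)"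
    "((\<lambda>\<epsilon>. alphaE'' b \<epsilon> u) \<longlongrightarrow> alpha2'' u) (at_right 0)"
    by (auto elim!: Lim_transform_eventually elim: eventually_mono)
qed

lemma eventually_small_eps:
  assumes "odd b" "3 \<le> b"
  shows "\<forall>\<^sub>F \<epsilon> in at_right 0. small_eps b \<epsilon>"
  unfolding eventually_at_right_field
  using assms by (intro exI[of _ "1/(8*(real_of_int b + 1))"]) (auto simp: small_eps_def)

lemma gE_W22_tendsto_positive:
  assumes "odd b" "3 \<le> b"
  shows "(\<forall>\<^sub>F \<epsilon> in at_right 0. W22 (gE b \<epsilon>) (Gsym_sgn (-1) (alphaE' b \<epsilon>)) (Gsym_sgn 1 (alphaE'' b \<epsilon>)))"
    and "((\<lambda>\<epsilon>. sqnorm01 (\<lambda>t. gE b \<epsilon> t - tpc_pi t)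
        + sqnorm01 (\<lambda>t. Gsym_sgn (-1) (alphaE' b \<epsilon>) t - Gsym_sgn (-1) alpha2' t)
        + sqnorm01 (\<lambda>t. Gsym_sgn 1 (alphaE'' b \<epsilon>) t - Gsym_sgn 1 alpha2'' t)) \<longlongrightarrow> 0) (at_right 0)"
proof -
  note small = eventually_small_eps[OF assms]
  show "\<forall>\<^sub>F \<epsilon> in at_right 0. W22 (gE b \<epsilon>) (Gsym_sgn (-1) (alphaE' b \<epsilon>)) (Gsym_sgn 1 (alphaE'' b \<epsilon>))"
    using small by eventually_elim (rule small_eps.W22_gE)
  have conv: "((\<lambda>\<epsilon>. sqnorm01 (\<lambda>t. Gsym_sgn sg (A \<epsilon>) t - Gsym_sgn sg A0 t)) \<longlongrightarrow> 0) (at_right 0)"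
    if lim: "\<And>u. u \<in> {0<..<1/4} \<Longrightarrow> ((\<lambda>\<epsilon>. A \<epsilon> u) \<longlongrightarrow> A0 u) (at_right 0)"
      and A: "\<And>\<epsilon> u. small_eps b \<epsilon> \<Longrightarrow> u \<in> {0..1/4} \<Longrightarrow> norm (A \<epsilon> u) \<le> 96"
        "\<And>\<epsilon>. small_eps b \<epsilon> \<Longrightarrow> A \<epsilon> \<in> borel_measurable borel"
      and A0: "continuous_on UNIV A0" "\<And>u. norm (A0 u) \<le> 96" and sg: "\<bar>sg\<bar> = 1"
    for A A0 and sg :: real
  proof (rule sqnorm01_Gsym_sgn_tendsto_0[OF lim _ _ _ sg])
    show "\<forall>\<^sub>F \<epsilon> in at_right 0. A \<epsilon> \<in> borel_measurable borel \<and> (\<forall>u\<in>{0..1/4}. norm (A \<epsilon> u) \<le> 96)"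
      using small by eventually_elim (use A in blast)
  qed (use A0 in \<open>auto intro: borel_measurable_continuous_onI\<close>)
  have "((\<lambda>\<epsilon>. sqnorm01 (\<lambda>t. gE b \<epsilon> t - tpc_pi t)) \<longlongrightarrow> 0) (at_right 0)"
  proof (rule Lim_transform_eventually)
    show "\<forall>\<^sub>F \<epsilon> in at_right 0. sqnorm01 (\<lambda>t. Gsym_sgn 1 (alphaE b \<epsilon>) t - Gsym_sgn 1 alpha2 t)
        = sqnorm01 (\<lambda>t. gE b \<epsilon> t - tpc_pi t)"
      using small by eventually_elim (simp add: small_eps.gE_eq_Gsym_sgn tpc_pi_def Gsym_eq_Gsym_sgn)
  qed (use continuous_on_alpha2 norm_alpha2_le small_eps.alphaE_bounded small_eps.continuous_on_alphaE
      tendsto_alphaE in \<open>auto intro!: conv intro: borel_measurable_continuous_onI\<close>)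
  moreover have "((\<lambda>\<epsilon>. sqnorm01 (\<lambda>t. Gsym_sgn (-1) (alphaE' b \<epsilon>) t - Gsym_sgn (-1) alpha2' t)) \<longlongrightarrow> 0) (at_right 0)"
    using continuous_on_alpha2 norm_alpha2_le small_eps.alphaE_bounded small_eps.continuous_on_alphaE tendsto_alphaE
    by (auto intro!: conv intro: borel_measurable_continuous_onI)
  moreover have "((\<lambda>\<epsilon>. sqnorm01 (\<lambda>t. Gsym_sgn 1 (alphaE'' b \<epsilon>) t - Gsym_sgn 1 alpha2'' t)) \<longlongrightarrow> 0) (at_right 0)"
    using continuous_on_alpha2 norm_alpha2_le small_eps.alphaE_bounded small_eps.borel_measurable_alphaE''
      tendsto_alphaE
    by (auto intro!: conv)
  ultimately show "((\<lambda>\<epsilon>. sqnorm01 (\<lambda>t. gE b \<epsilon> t - tpc_pi t)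
        + sqnorm01 (\<lambda>t. Gsym_sgn (-1) (alphaE' b \<epsilon>) t - Gsym_sgn (-1) alpha2' t)
        + sqnorm01 (\<lambda>t. Gsym_sgn 1 (alphaE'' b \<epsilon>) t - Gsym_sgn 1 alpha2'' t)) \<longlongrightarrow> 0) (at_right 0)"
    using tendsto_add[OF tendsto_add] by fastforce
qed

section \<open>Mirror images\<close>

text \<open>No integrability hypothesis is needed: \<open>reflz\<close> is invertible, so for non-integrable \<open>f\<close>
  both sides are \<open>0\<close>.\<close>

lemma set_integral_reflz: "(LINT x:A|M. reflz (f x)) = reflz (LINT x:A|M. f x)"
  unfolding set_lebesgue_integral_def reflz_scaleR[symmetric]
  using bounded_linear_reflections(4) by (intro integral_bounded_linear') auto

lemma W22_reflz:
  assumes "W22 f f1 f2"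
  shows "W22 (\<lambda>t. reflz (f t)) (\<lambda>t. reflz (f1 t)) (\<lambda>t. reflz (f2 t))"
proof -
  have [measurable]: "reflz \<in> borel_measurable borel" by measurable
  have integrable: "set_integrable M A (\<lambda>x. reflz (g x))" if "set_integrable M A g" for M A g
    using integrable_bounded_linear[OF bounded_linear_reflections(4) that[unfolded set_integrable_def]]
    by (simp add: set_integrable_def reflz_scaleR)
  have "L2_on01 (\<lambda>t. reflz (g t))" if "L2_on01 g" for g
    using that measurable_compose[OF _ borel_measurable_reflections(4), of g lborel]
    unfolding L2_on01_def by simp
  moreover have "weak_deriv (\<lambda>t. reflz (g t)) (\<lambda>t. reflz (h t))" if "weak_deriv g h" for g h
    using that unfolding weak_deriv_def
    by (simp add: integrable reflz_scaleR[symmetric] set_integral_reflz vec3_eq_iff)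
  ultimately show ?thesis
    using assms unfolding W22_def periodic1_def by simp
qed

lemma reflz_Gsym_sgn_planar:
  assumes "\<And>u. \<alpha> u $ 3 = 0"
  shows "reflz (Gsym_sgn sg \<alpha> t) = Gsym_sgn sg \<alpha> t"
  using assms by (simp add: vec3_eq_iff Gsym_sgn_def Let_def)

lemma sqnorm01_reflz_diff:
  assumes "\<And>t. reflz (g t) = g t"
  shows "sqnorm01 (\<lambda>t. reflz (f t) - g t) = sqnorm01 (\<lambda>t. f t - g t)"
proof -
  have "reflz (f t) - g t = reflz (f t - g t)" for t
    using assms[of t] by (simp add: vec3_eq_iff)
  then show ?thesis by (simp add: sqnorm01_def)
qed

lemma gE_negative: "b < 0 \<Longrightarrow> gE b \<epsilon> t = reflz (gE (- b) \<epsilon> t)"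
  by (simp add: gE_def)

lemma reflz_tpc_pi:
  "reflz (tpc_pi t) = tpc_pi t" "reflz (Gsym_sgn (-1) alpha2' t) = Gsym_sgn (-1) alpha2' t"
  "reflz (Gsym_sgn 1 alpha2'' t) = Gsym_sgn 1 alpha2'' t"
  unfolding tpc_pi_def Gsym_eq_Gsym_sgn
  by (simp_all add: reflz_Gsym_sgn_planar alpha2_mk3 alpha2'_def alpha2''_def)

lemma W22_tendsto_reflz:
  assumes W: "\<forall>\<^sub>F \<epsilon> in at_right 0. W22 (g \<epsilon>) (G1 \<epsilon>) (G2 \<epsilon>)"
    and conv: "((\<lambda>\<epsilon>. sqnorm01 (\<lambda>t. g \<epsilon> t - f t) + sqnorm01 (\<lambda>t. G1 \<epsilon> t - T1 t)
      + sqnorm01 (\<lambda>t. G2 \<epsilon> t - T2 t)) \<longlongrightarrow> 0) (at_right 0)"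
    and planar: "\<And>t. reflz (f t) = f t" "\<And>t. reflz (T1 t) = T1 t" "\<And>t. reflz (T2 t) = T2 t"
  shows "\<forall>\<^sub>F \<epsilon> in at_right 0. W22 (\<lambda>t. reflz (g \<epsilon> t)) (\<lambda>t. reflz (G1 \<epsilon> t)) (\<lambda>t. reflz (G2 \<epsilon> t))"
    and "((\<lambda>\<epsilon>. sqnorm01 (\<lambda>t. reflz (g \<epsilon> t) - f t) + sqnorm01 (\<lambda>t. reflz (G1 \<epsilon> t) - T1 t)
      + sqnorm01 (\<lambda>t. reflz (G2 \<epsilon> t) - T2 t)) \<longlongrightarrow> 0) (at_right 0)"
  using W conv by (auto elim: eventually_mono intro: W22_reflz simp: sqnorm01_reflz_diff planar)

theorem lemma5p1:
  fixes b :: int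
  assumes "odd b" and "b \<noteq> 1" and "b \<noteq> -1"
  shows "\<exists>G1 G2 T1 T2. W22 tpc_pi T1 T2 \<and>
     (\<forall>\<^sub>F \<epsilon> in at_right 0. W22 (gE b \<epsilon>) (G1 \<epsilon>) (G2 \<epsilon>)) \<and>
     ((\<lambda>\<epsilon>. sqnorm01 (\<lambda>t. gE b \<epsilon> t - tpc_pi t) + sqnorm01 (\<lambda>t. G1 \<epsilon> t - T1 t)
            + sqnorm01 (\<lambda>t. G2 \<epsilon> t - T2 t)) \<longlongrightarrow> 0) (at_right 0)"
proof -
  define n where "n = \<bar>b\<bar>"
  have n: "odd n" "3 \<le> n"
    using assms unfolding n_def by (simp_all add: abs_if) presburger
  note positive = gE_W22_tendsto_positive[OF n]
  show ?thesis
  proof (cases "0 \<le> b")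
    case True
    then have "n = b" by (simp add: n_def)
    show ?thesis
      by (rule exI[of _ "\<lambda>\<epsilon>. Gsym_sgn (-1) (alphaE' n \<epsilon>)"], rule exI[of _ "\<lambda>\<epsilon>. Gsym_sgn 1 (alphaE'' n \<epsilon>)"])
        (use W22_tpc_pi positive[unfolded \<open>n = b\<close>] \<open>n = b\<close> in blast)
  next
    case False
    then have mirror: "gE b \<epsilon> = (\<lambda>t. reflz (gE n \<epsilon> t))" for \<epsilon>
      by (simp add: n_def gE_negative fun_eq_iff)
    show ?thesis
      unfolding mirror
      by (rule exI[of _ "\<lambda>\<epsilon> t. reflz (Gsym_sgn (-1) (alphaE' n \<epsilon>) t)"],
          rule exI[of _ "\<lambda>\<epsilon> t. reflz (Gsym_sgn 1 (alphaE'' n \<epsilon>) t)"])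
        (use W22_tpc_pi W22_tendsto_reflz[OF positive reflz_tpc_pi] in blast)
  qed
qed

end
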